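(* Let $X$ be a Hausdorff space and $D\subseteq X$ a dense subset. If $D^{\mathfrak c}$ is relatively countably compact in $X^{\mathfrak c}$, then $[D]^{<\omega}\setminus\{\emptyset\}$ is relatively countably compact in $\operatorname{CL}(X)$ and $\operatorname{CL}(X)$ is pseudocompact.
   Context: A subset $Y$ of a space $Z$ is relatively countably compact in $Z$ if every countably infinite subset of $Y$ has an accumulation point in $Z$. $[D]^{<\omega}$ is the set of finite subsets of $D$ (nonempty finite subsets of a $T_1$ space are closed, hence points of $\operatorname{CL}(X)$). $\operatorname{CL}(X)$ is the set of nonempty closed subsets of $X$ with the Vietoris topology, generated by $A^+=\{F:F\subseteq A\}$ and $A^-=\{F:F\cap A\ne\emptyset\}$ for open $A\subseteq X$. Powers carry the product topology. Pseudocompact means every continuous real-valued function is bounded. *)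

theory Defs
  imports "HOL-Analysis.Analysis"
begin

definition CL :: "'a topology \<Rightarrow> 'a set set" where
  "CL X = {F. closedin X F \<and> F \<noteq> {}}"

definition vietoris :: "'a topology \<Rightarrow> 'a set topology" where
  "vietoris X = topology_generated_by
     ({ {F \<in> CL X. F \<subseteq> A} | A. openin X A } \<union>
      { {F \<in> CL X. F \<inter> A \<noteq> {}} | A. openin X A })"

definition rel_countably_compact :: "'b topology \<Rightarrow> 'b set \<Rightarrow> bool" where
  "rel_countably_compact Z Y \<longleftrightarrow>
     (\<forall>S. S \<subseteq> Y \<and> countable S \<and> infinite S \<longrightarrow> Z derived_set_of S \<noteq> {})"

definition pseudocompact :: "'b topology \<Rightarrow> bool" where
  "pseudocompact Z \<longleftrightarrow>
     (\<forall>f. continuous_map Z euclideanreal f \<longrightarrow> bounded (f ` topspace Z))"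

end

theory Submission
  imports Defs
begin

text \<open>
  Enumerate a countably infinite family of finite subsets of \<open>D\<close> as \<open>F 0, F 1, \<dots>\<close>. Since
  there are only continuum many choice functions \<open>n \<mapsto> a n \<in> F n\<close>, one can build points
  \<open>x\<^sub>n \<in> D\<^sup>\<real>\<close> whose coordinates realise every such choice function at once. An
  accumulation point \<open>p\<close> of the \<open>x\<^sub>n\<close> then yields the closed set \<open>K = cl(range p)\<close>, an
  accumulation point of the \<open>F n\<close> in the Vietoris topology: a coordinate realising a choice
  outside \<open>W\<close> forces the \<open>F n\<close> picked near \<open>p\<close> into \<open>W\<close>, and coordinates of \<open>p\<close> inside the
  sets \<open>V\<close> force them to meet each \<open>V\<close>.
  Pseudocompactness follows because the finite subsets of \<open>D\<close> are dense in \<open>CL(X)\<close>: an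
  unbounded continuous function would be unbounded along a sequence of them, and no
  accumulation point of that sequence is possible.
\<close>

lemma nat_funs_lepoll_reals: "(UNIV :: (nat \<Rightarrow> nat) set) \<lesssim> (UNIV :: real set)"
proof -
  have "inj (\<lambda>g::nat \<Rightarrow> nat. range (\<lambda>n. to_nat (n, g n)))"
  proof (rule injI, rule ext)
    fix f g :: "nat \<Rightarrow> nat" and n
    assume "range (\<lambda>n. to_nat (n, f n)) = range (\<lambda>n. to_nat (n, g n))"
    then obtain m where "to_nat (n, f n) = to_nat (m, g m)"
      by blast
    then show "f n = g n"
      by auto
  qed
  then have "(UNIV :: (nat \<Rightarrow> nat) set) \<lesssim> (UNIV :: nat set set)"
    by (auto simp: lepoll_def)
  also have "(UNIV :: nat set set) \<lesssim> (UNIV :: real set)"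
    by (rule eqpoll_imp_lepoll[OF nat_sets_eqpoll_reals])
  finally show ?thesis .
qed

lemma countable_choices_as_coordinates:
  fixes F :: "nat \<Rightarrow> 'a set"
  assumes nonempty: "\<And>n. F n \<noteq> {}" and countable: "\<And>n. countable (F n)"
  obtains x :: "nat \<Rightarrow> real \<Rightarrow> 'a"
  where "\<And>n t. x n t \<in> F n"
    and "\<And>a. (\<And>n. a n \<in> F n) \<Longrightarrow> \<exists>s. \<forall>n. x n s = a n"
    and "\<And>n. range (x n) = F n"
proof -
  obtain e :: "(nat \<Rightarrow> nat) \<Rightarrow> real" where "inj e"
    using nat_funs_lepoll_reals by (auto simp: lepoll_def)
  define x where "x n t = from_nat_into (F n) (inv e t n)" for n t
  have x_in: "x n t \<in> F n" for n t
    unfolding x_def using nonempty by (rule from_nat_into)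
  have realise: "\<exists>s. \<forall>n. x n s = a n" if a: "\<And>n. a n \<in> F n" for a
  proof -
    define k where "k n = inv_into UNIV (from_nat_into (F n)) (a n)" for n
    have "from_nat_into (F n) (k n) = a n" for n
      unfolding k_def using a nonempty countable by (simp add: f_inv_into_f)
    then show ?thesis
      by (intro exI[of _ "e k"]) (simp add: x_def \<open>inj e\<close>)
  qed
  have "range (x n) = F n" for n
  proof
    show "F n \<subseteq> range (x n)"
    proof
      fix y assume "y \<in> F n"
      then have "\<And>m. (if m = n then y else x m 0) \<in> F m"
        using x_in by simp
      then obtain s where "\<forall>m. x m s = (if m = n then y else x m 0)"
        by (rule realise[THEN exE])
      then show "y \<in> range (x n)"
        by (metis rangeI)
    qed
  qed (use x_in in auto)
  with x_in realise show thesis by (rule that)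
qed

lemma finite_in_CL:
  assumes "t1_space X" "finite F" "F \<subseteq> topspace X" "F \<noteq> {}"
  shows "F \<in> CL X"
  using assms by (simp add: CL_def t1_space_closedin_finite)

lemma topspace_vietoris: "topspace (vietoris X) = CL X"
proof -
  have "CL X \<in> {{F \<in> CL X. F \<subseteq> A} | A. openin X A}"
    by (auto simp: CL_def dest: closedin_subset intro!: exI[of _ "topspace X"])
  then show ?thesis
    unfolding vietoris_def by auto
qed

lemma openin_vietoris_upper: "openin X A \<Longrightarrow> openin (vietoris X) {F \<in> CL X. F \<subseteq> A}"
  unfolding vietoris_def by (rule topology_generated_by_Basis) blast

lemma openin_vietoris_lower: "openin X A \<Longrightarrow> openin (vietoris X) {F \<in> CL X. F \<inter> A \<noteq> {}}"
  unfolding vietoris_def by (rule topology_generated_by_Basis) blast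

definition vietoris_box :: "'a topology \<Rightarrow> 'a set \<Rightarrow> 'a set set \<Rightarrow> 'a set set" where
  "vietoris_box X W \<V> = {F \<in> CL X. F \<subseteq> W \<and> (\<forall>V\<in>\<V>. F \<inter> V \<noteq> {})}"

lemma vietoris_box_Int:
  "vietoris_box X W \<V> \<inter> vietoris_box X W' \<V>' = vietoris_box X (W \<inter> W') (\<V> \<union> \<V>')"
  by (auto simp: vietoris_box_def)

lemma openin_vietoris_imp_box:
  assumes "openin (vietoris X) U" "G \<in> U"
  shows "\<exists>W \<V>. openin X W \<and> finite \<V> \<and> (\<forall>V\<in>\<V>. openin X V) \<and>
           G \<in> vietoris_box X W \<V> \<and> vietoris_box X W \<V> \<subseteq> U"
proof -
  have "generate_topology_on
      ({{F \<in> CL X. F \<subseteq> A} | A. openin X A} \<union> {{F \<in> CL X. F \<inter> A \<noteq> {}} | A. openin X A}) U"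
    using assms(1) unfolding vietoris_def openin_topology_generated_by_iff .
  then show ?thesis
    using assms(2)
  proof (induction arbitrary: G)
    case (Int U U')
    then have "G \<in> U" "G \<in> U'"
      by auto
    obtain W \<V> where "openin X W" "finite \<V>" "\<forall>V\<in>\<V>. openin X V"
      "G \<in> vietoris_box X W \<V>" "vietoris_box X W \<V> \<subseteq> U"
      using Int.IH(1)[OF \<open>G \<in> U\<close>] by blast
    moreover obtain W' \<V>' where "openin X W'" "finite \<V>'" "\<forall>V\<in>\<V>'. openin X V"
      "G \<in> vietoris_box X W' \<V>'" "vietoris_box X W' \<V>' \<subseteq> U'"
      using Int.IH(2)[OF \<open>G \<in> U'\<close>] by blast
    moreover note vietoris_box_Int[of X W \<V> W' \<V>']
    ultimately show ?case
      by (intro exI[of _ "W \<inter> W'"] exI[of _ "\<V> \<union> \<V>'"]) auto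
  next
    case (UN \<K>)
    then obtain U where "U \<in> \<K>" "G \<in> U"
      by blast
    with UN.IH show ?case
      by (meson Union_upper order_trans)
  next
    case (Basis U)
    then consider A where "openin X A" "U = {F \<in> CL X. F \<subseteq> A}"
      | A where "openin X A" "U = {F \<in> CL X. F \<inter> A \<noteq> {}}"
      by blast
    then show ?case
    proof cases
      case 1
      then show ?thesis
        using Basis.prems by (intro exI[of _ A] exI[of _ "{}"]) (auto simp: vietoris_box_def)
    next
      case 2
      then show ?thesis
        using Basis.prems
        by (intro exI[of _ "topspace X"] exI[of _ "{A}"]) (auto simp: vietoris_box_def CL_def closedin_subset)
    qed
  qed simp
qed

lemma t1_space_vietoris:
  assumes "t1_space X"
  shows "t1_space (vietoris X)"
  unfolding t1_space_def topspace_vietoris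
proof (intro ballI impI)
  fix G H assume G: "G \<in> CL X" and H: "H \<in> CL X" and "G \<noteq> H"
  then have "G \<subseteq> topspace X" "H \<subseteq> topspace X"
    by (auto simp: CL_def closedin_subset)
  show "\<exists>U. openin (vietoris X) U \<and> G \<in> U \<and> H \<notin> U"
  proof (cases "G \<subseteq> H")
    case False
    let ?U = "{F \<in> CL X. F \<inter> (topspace X - H) \<noteq> {}}"
    have "openin (vietoris X) ?U"
      using H by (intro openin_vietoris_lower) (auto simp: CL_def)
    moreover have "G \<in> ?U" "H \<notin> ?U"
      using False G \<open>G \<subseteq> topspace X\<close> by auto
    ultimately show ?thesis
      by blast
  next
    case True
    then obtain x where x: "x \<in> H" "x \<notin> G"
      using \<open>G \<noteq> H\<close> by blast
    let ?U = "{F \<in> CL X. F \<subseteq> topspace X - {x}}"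
    have "openin (vietoris X) ?U"
      using x \<open>H \<subseteq> topspace X\<close> closedin_t1_singleton[OF assms]
      by (intro openin_vietoris_upper) auto
    moreover have "G \<in> ?U" "H \<notin> ?U"
      using x G \<open>G \<subseteq> topspace X\<close> by auto
    ultimately show ?thesis
      by blast
  qed
qed

lemma vietoris_open_meets_finite_subsets:
  assumes "t1_space X" "D \<subseteq> topspace X" "X closure_of D = topspace X"
    and "openin (vietoris X) U" "U \<noteq> {}"
  shows "U \<inter> {E. E \<subseteq> D \<and> finite E \<and> E \<noteq> {}} \<noteq> {}"
proof -
  obtain G where "G \<in> U"
    using assms(5) by blast
  then obtain W \<V> where W: "openin X W" "finite \<V>" "\<forall>V\<in>\<V>. openin X V"
    "G \<in> vietoris_box X W \<V>" "vietoris_box X W \<V> \<subseteq> U"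
    using openin_vietoris_imp_box[OF assms(4)] by meson
  have "\<exists>d\<in>D. d \<in> V \<inter> W" if "V \<in> insert W \<V>" for V
  proof -
    have "V \<inter> W \<noteq> {}"
      using W(4) that by (auto simp: vietoris_box_def CL_def)
    moreover have "openin X (V \<inter> W)"
      using W(1,3) that by auto
    ultimately show ?thesis
      using assms(3) unfolding dense_intersects_open by blast
  qed
  then obtain d where d: "\<And>V. V \<in> insert W \<V> \<Longrightarrow> d V \<in> D \<and> d V \<in> V \<inter> W"
    by metis
  let ?E = "d ` insert W \<V>"
  have "?E \<in> CL X"
    using d assms(1,2) W(2) by (intro finite_in_CL) auto
  then have "?E \<in> vietoris_box X W \<V>"
    using d by (fastforce simp: vietoris_box_def)
  with W(5) have "?E \<in> U"
    by blast
  moreover have "?E \<subseteq> D" "finite ?E" "?E \<noteq> {}"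
    using d W(2) by auto
  ultimately show ?thesis
    by blast
qed

lemma t1_space_derived_set_of_imp_infinite:
  assumes "t1_space X" "x \<in> X derived_set_of S" "openin X U" "x \<in> U"
  shows "infinite (S \<inter> U)"
proof -
  have "X derived_set_of S = {x \<in> topspace X. \<forall>U. x \<in> U \<and> openin X U \<longrightarrow> infinite (S \<inter> U)}"
    using t1_space_derived_set_of_infinite_openin[THEN iffD1, OF assms(1), rule_format] .
  with assms(2-4) show ?thesis
    by auto
qed

lemma derived_set_of_unbounded_sequence:
  assumes t1: "t1_space Z" and f: "continuous_map Z euclideanreal f"
    and y: "\<And>n. real n < \<bar>f (y n)\<bar>"
  shows "Z derived_set_of range y = {}"
proof (rule ccontr)
  assume "Z derived_set_of range y \<noteq> {}"
  then obtain z where z: "z \<in> Z derived_set_of range y"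
    by blast
  define N where "N = {w \<in> topspace Z. f w \<in> {r. \<bar>r\<bar> < \<bar>f z\<bar> + 1}}"
  have "open {r. \<bar>r\<bar> < \<bar>f z\<bar> + 1}"
    by (intro open_Collect_less continuous_intros)
  then have "openin Z N"
    unfolding N_def by (intro openin_continuous_map_preimage[OF f]) simp
  moreover have "z \<in> N"
    using z by (simp add: N_def in_derived_set_of)
  ultimately have "infinite (range y \<inter> N)"
    by (rule t1_space_derived_set_of_imp_infinite[OF t1 z])
  moreover have "range y \<inter> N \<subseteq> y ` {..nat \<lceil>\<bar>f z\<bar> + 1\<rceil>}"
  proof clarify
    fix n assume "y n \<in> N"
    then have "n \<le> nat \<lceil>\<bar>f z\<bar> + 1\<rceil>"
      using y[of n] by (simp add: N_def) linarith
    then show "y n \<in> y ` {..nat \<lceil>\<bar>f z\<bar> + 1\<rceil>}"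
      by simp
  qed
  ultimately show False
    using finite_subset by blast
qed

lemma pseudocompact_if_dense_rel_countably_compact:
  assumes t1: "t1_space Z"
    and dense: "\<And>U. openin Z U \<Longrightarrow> U \<noteq> {} \<Longrightarrow> U \<inter> Y \<noteq> {}"
    and rcc: "rel_countably_compact Z Y"
  shows "pseudocompact Z"
  unfolding pseudocompact_def
proof (intro allI impI)
  fix f assume f: "continuous_map Z euclideanreal f"
  show "bounded (f ` topspace Z)"
  proof (rule ccontr)
    assume "\<not> bounded (f ` topspace Z)"
    then have "{z \<in> topspace Z. f z \<in> {r. real n < \<bar>r\<bar>}} \<noteq> {}" for n :: nat
      unfolding bounded_real by (auto simp: not_le)
    moreover have "openin Z {z \<in> topspace Z. f z \<in> {r. real n < \<bar>r\<bar>}}" for n :: nat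
      by (intro openin_continuous_map_preimage[OF f]) (simp add: open_Collect_less continuous_intros)
    ultimately have "\<exists>y\<in>Y. real n < \<bar>f y\<bar>" for n :: nat
      using dense by blast
    then obtain y where y: "\<And>n. y n \<in> Y" "\<And>n. real n < \<bar>f (y n)\<bar>"
      by metis
    have "infinite (range y)"
    proof
      assume "finite (range y)"
      then obtain M where M: "\<And>n. \<bar>f (y n)\<bar> \<le> M"
        using finite_imp_bounded[of "f ` range y"] unfolding bounded_real by auto
      show False
        using M[of "nat \<lceil>M\<rceil>"] y(2)[of "nat \<lceil>M\<rceil>"] real_nat_ceiling_ge[of M] by linarith
    qed
    then have "Z derived_set_of range y \<noteq> {}"
      using rcc y(1) unfolding rel_countably_compact_def by (simp add: image_subset_iff)
    with derived_set_of_unbounded_sequence[OF t1 f y(2)] show False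
      by blast
  qed
qed

lemma openin_product_topology_coordinate:
  assumes "openin X A" "t \<in> I"
  shows "openin (product_topology (\<lambda>_. X) I) {y \<in> I \<rightarrow>\<^sub>E topspace X. y t \<in> A}"
  using openin_continuous_map_preimage[OF continuous_map_product_projection[of t I "\<lambda>_. X"] assms(1)]
    assms(2) by simp

lemma closure_of_range_vietoris_box_contains_other:
  fixes X :: "'a topology" and F :: "nat \<Rightarrow> 'a set" and x :: "nat \<Rightarrow> real \<Rightarrow> 'a"
    and p :: "real \<Rightarrow> 'a"
  defines "PT \<equiv> product_topology (\<lambda>_::real. X) UNIV" and "K \<equiv> X closure_of range p"
  assumes t1: "t1_space X" and "inj F" and F_CL: "\<And>n. F n \<in> CL X"
    and x_in: "\<And>n t. x n t \<in> F n"
    and realise: "\<And>a. (\<And>n. a n \<in> F n) \<Longrightarrow> \<exists>s. \<forall>n. x n s = a n"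
    and p: "p \<in> PT derived_set_of range x"
    and W: "openin X W" "finite \<V>" "\<forall>V\<in>\<V>. openin X V" "K \<in> vietoris_box X W \<V>"
  shows "\<exists>n. F n \<in> vietoris_box X W \<V> \<and> F n \<noteq> K"
proof -
  have "p \<in> topspace PT"
    using p by (simp add: in_derived_set_of)
  have "\<exists>t. p t \<in> V" if "V \<in> \<V>" for V
    using W(3,4) that openin_Int_closure_of_eq_empty[of X V "range p"]
    by (auto simp: vietoris_box_def K_def)
  then obtain tV where tV: "\<And>V. V \<in> \<V> \<Longrightarrow> p (tV V) \<in> V"
    by metis
  have "\<exists>y \<in> F n. F n \<subseteq> W \<or> y \<notin> W" for n
    using F_CL[of n] by (auto simp: CL_def)
  then obtain a where a: "\<And>n. a n \<in> F n" "\<And>n. F n \<subseteq> W \<or> a n \<notin> W"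
    by metis
  \<comment> \<open>Coordinate \<open>s\<close> witnesses, for every \<open>n\<close> at once, whether \<open>F n \<subseteq> W\<close>.\<close>
  obtain s where "\<forall>n. x n s = a n"
    using realise[OF a(1)] by blast
  with a(2) have s: "\<And>n. x n s \<in> W \<Longrightarrow> F n \<subseteq> W"
    by metis
  define N where "N = {y \<in> topspace PT. y s \<in> W} \<inter> (\<Inter>V\<in>\<V>. {y \<in> topspace PT. y (tV V) \<in> V})"
  have "openin PT N"
    unfolding N_def
  proof (rule openin_Int_Inter)
    show "finite ((\<lambda>V. {y \<in> topspace PT. y (tV V) \<in> V}) ` \<V>)"
      using W(2) by simp
  qed (use W(1,3) in \<open>auto simp: PT_def intro!: openin_product_topology_coordinate\<close>)
  moreover have "p \<in> N"
    using \<open>p \<in> topspace PT\<close> closure_of_subset[of "range p" X] W(4) tV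
    by (auto simp: N_def vietoris_box_def K_def PT_def)
  moreover have "t1_space PT"
    using t1 by (simp add: PT_def t1_space_product_topology)
  ultimately have "infinite (range x \<inter> N)"
    using p by (intro t1_space_derived_set_of_imp_infinite)
  moreover have "finite (x ` (F -` {K}))"
    using \<open>inj F\<close> by (intro finite_imageI finite_vimageI) auto
  ultimately have "range x \<inter> N - x ` (F -` {K}) \<noteq> {}"
    by (intro infinite_imp_nonempty Diff_infinite_finite)
  then obtain n where n: "x n \<in> N" "F n \<noteq> K"
    by blast
  have "F n \<subseteq> W"
    using n(1) s by (simp add: N_def)
  moreover have "F n \<inter> V \<noteq> {}" if "V \<in> \<V>" for V
    using n(1) that x_in[of n "tV V"] by (auto simp: N_def)
  ultimately have "F n \<in> vietoris_box X W \<V>"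
    using F_CL by (simp add: vietoris_box_def)
  with n(2) show ?thesis
    by blast
qed

lemma closure_of_range_in_vietoris_derived_set:
  fixes X :: "'a topology" and F :: "nat \<Rightarrow> 'a set" and x :: "nat \<Rightarrow> real \<Rightarrow> 'a"
  assumes t1: "t1_space X" and "inj F" and F_CL: "\<And>n. F n \<in> CL X"
    and x_in: "\<And>n t. x n t \<in> F n"
    and realise: "\<And>a. (\<And>n. a n \<in> F n) \<Longrightarrow> \<exists>s. \<forall>n. x n s = a n"
    and p: "p \<in> product_topology (\<lambda>_::real. X) UNIV derived_set_of range x"
  shows "X closure_of range p \<in> vietoris X derived_set_of range F"
proof -
  define K where "K = X closure_of range p"
  have "range p \<subseteq> topspace X"
    using p by (auto simp: in_derived_set_of)
  then have "K \<in> CL X"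
    using closure_of_subset[of "range p" X] by (auto simp: K_def CL_def)
  have "\<exists>G\<in>range F. G \<in> U \<and> G \<noteq> K" if U: "openin (vietoris X) U" "K \<in> U" for U
  proof -
    obtain W \<V> where W: "openin X W" "finite \<V>" "\<forall>V\<in>\<V>. openin X V"
      "K \<in> vietoris_box X W \<V>" "vietoris_box X W \<V> \<subseteq> U"
      using openin_vietoris_imp_box[OF U] by meson
    obtain n where "F n \<in> vietoris_box X W \<V>" "F n \<noteq> K"
      using closure_of_range_vietoris_box_contains_other[OF t1 \<open>inj F\<close> F_CL x_in realise p
          W(1-3) W(4)[unfolded K_def]]
      unfolding K_def by blast
    with W(5) show ?thesis
      by blast
  qed
  then have "K \<in> vietoris X derived_set_of range F"
    using \<open>K \<in> CL X\<close> unfolding in_derived_set_of topspace_vietoris by blast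
  then show ?thesis
    by (simp add: K_def)
qed

lemma rel_countably_compact_vietoris_finite_subsets:
  assumes t1: "t1_space X" and "D \<subseteq> topspace X"
    and rcc: "rel_countably_compact (product_topology (\<lambda>_::real. X) UNIV) (PiE UNIV (\<lambda>_. D))"
  shows "rel_countably_compact (vietoris X) {F. F \<subseteq> D \<and> finite F \<and> F \<noteq> {}}"
  unfolding rel_countably_compact_def
proof (intro allI impI, elim conjE)
  fix S assume S: "S \<subseteq> {F. F \<subseteq> D \<and> finite F \<and> F \<noteq> {}}" "countable S" "infinite S"
  define F where "F = from_nat_into S"
  have "bij_betw F UNIV S"
    unfolding F_def using S(2,3) by (rule bij_betw_from_nat_into)
  then have "inj F" "range F = S"
    by (auto simp: bij_betw_def)
  then have F: "F n \<subseteq> D" "finite (F n)" "F n \<noteq> {}" for n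
    using S(1) by auto
  then have F_CL: "F n \<in> CL X" for n
    using t1 \<open>D \<subseteq> topspace X\<close> by (meson finite_in_CL subset_trans)
  have F_countable: "countable (F n)" for n
    using F(2) by (rule countable_finite)
  obtain x :: "nat \<Rightarrow> real \<Rightarrow> 'a" where x_in: "\<And>n t. x n t \<in> F n"
    and realise: "\<And>a. (\<And>n. a n \<in> F n) \<Longrightarrow> \<exists>s. \<forall>n. x n s = a n"
    and range_x: "\<And>n. range (x n) = F n"
    using countable_choices_as_coordinates[of F, OF F(3) F_countable] by blast
  have "inj x"
  proof (rule injI)
    fix n m assume "x n = x m"
    then have "F n = F m"
      using range_x[of n] range_x[of m] by simp
    with \<open>inj F\<close> show "n = m"
      by (rule injD)
  qed
  then have "countable (range x)" "infinite (range x)"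
    by (auto dest: finite_imageD)
  moreover have "range x \<subseteq> PiE UNIV (\<lambda>_. D)"
    using x_in F(1) by (auto simp: PiE_UNIV_domain)
  ultimately have "product_topology (\<lambda>_::real. X) UNIV derived_set_of range x \<noteq> {}"
    using rcc unfolding rel_countably_compact_def by simp
  then obtain p where "p \<in> product_topology (\<lambda>_::real. X) UNIV derived_set_of range x"
    by blast
  from closure_of_range_in_vietoris_derived_set[OF t1 \<open>inj F\<close> F_CL x_in realise this]
  show "vietoris X derived_set_of S \<noteq> {}"
    using \<open>range F = S\<close> by blast
qed

theorem theorem3p2:
  fixes X :: "'a topology" and D :: "'a set"
  assumes "Hausdorff_space X"
    and "D \<subseteq> topspace X" and "X closure_of D = topspace X"
    and "rel_countably_compact (product_topology (\<lambda>_::real. X) UNIV) (PiE UNIV (\<lambda>_. D))"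
  shows "rel_countably_compact (vietoris X) {F. F \<subseteq> D \<and> finite F \<and> F \<noteq> {}}
         \<and> pseudocompact (vietoris X)"
proof -
  have t1: "t1_space X"
    using assms(1) by (rule Hausdorff_imp_t1_space)
  let ?finite_subsets = "{F. F \<subseteq> D \<and> finite F \<and> F \<noteq> {}}"
  have rcc: "rel_countably_compact (vietoris X) ?finite_subsets"
    using t1 assms(2,4) by (rule rel_countably_compact_vietoris_finite_subsets)
  have "pseudocompact (vietoris X)"
    using vietoris_open_meets_finite_subsets[OF t1 assms(2,3)] rcc
    by (rule pseudocompact_if_dense_rel_countably_compact[OF t1_space_vietoris[OF t1]])
  with rcc show ?thesis ..
qed

end
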